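(* Let $f:\mathbb{R}_+\to\mathbb{R}_+$ and $g:\mathbb{R}^2\to\mathbb{R}_+$ be non-negative, $g$ symmetric, and $\kappa(t,x,y)=1\wedge f(t)g(x,y)$. Let $W^{(1)},W^{(2)}$ be i.i.d. copies of a real random variable $W$. Assume (1) there are $\alpha_p>1$ and $t_1\ge0$ with $f(t)\le t^{-\alpha_p}$ for all $t>t_1$, and (2) there are $\beta_p>0$ and $t_2\ge0$ with $\mathbb{P}(g(W^{(1)},W^{(2)})>t)\le t^{-\beta_p}$ for all $t>t_2$. Then for every $\epsilon>0$ there is $t_0=t_0(\epsilon)>0$ such that for all $t>t_0$, $$\mathbb{E}\big[\kappa(t,W^{(1)},W^{(2)})\big]\le t^{-\min\{\alpha_p,\alpha_p\beta_p\}+\epsilon}.$$ *)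

theory Defs
  imports "HOL-Probability.Probability"
begin

definition kappa :: "(real \<Rightarrow> real) \<Rightarrow> (real \<Rightarrow> real \<Rightarrow> real) \<Rightarrow> real \<Rightarrow> real \<Rightarrow> real \<Rightarrow> real" where
  "kappa f g t x y = min 1 (f t * g x y)"

end

theory Submission
  imports Defs
begin

text \<open>Bound \<open>f t\<close> by \<open>s = t powr -\<alpha>\<close> and cut the range of \<open>G = g(W1, W2)\<close> at the levels
  \<open>K i = t powr (\<alpha> i / N)\<close>, \<open>i = 1, \<dots>, N\<close>. Where \<open>K i < G \<le> K (i + 1)\<close> we have
  \<open>min 1 (s G) \<le> s K (i + 1)\<close>, and the tail hypothesis gives \<open>P(G > K i) \<le> t powr (- \<alpha> \<beta> i / N)\<close>.
  Each of the resulting \<open>N + 1\<close> terms is at most \<open>t powr (- min \<alpha> (\<alpha> \<beta>) + \<alpha> / N)\<close>, since its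
  exponent involves \<open>(1 - i/N) \<alpha> + (i/N) \<alpha> \<beta>\<close>, a convex combination of \<open>\<alpha>\<close> and \<open>\<alpha> \<beta>\<close>.
  Taking \<open>N \<ge> 2 \<alpha> / \<epsilon>\<close> and \<open>t\<close> so large that \<open>N + 1 \<le> t powr (\<epsilon> / 2)\<close> absorbs both losses
  into \<open>t powr \<epsilon>\<close>. Only the tail of \<open>g(W1, W2)\<close> enters.\<close>

lemma min_one_mult_le_indicator:
  fixes s x y :: real
  assumes "0 \<le> s" "0 \<le> y"
  shows "min 1 (s * x) \<le> s * y + indicator {y<..} x"
proof (cases "x \<le> y")
  case True
  then show ?thesis
    using assms by (simp add: mult_left_mono min.coboundedI2 indicator_def)
next
  case False
  then show ?thesis
    using assms by (simp add: min.coboundedI1 indicator_def)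
qed

lemma min_one_mult_le_level_sum:
  fixes s x :: real and K :: "nat \<Rightarrow> real"
  assumes "1 \<le> N" and s: "0 \<le> s" and K: "\<And>i. 0 \<le> K i"
  shows "min 1 (s * x) \<le> s * K 1 + (\<Sum>i\<in>{1..<N}. s * K (Suc i) * indicator {K i<..} x)
           + indicator {K N<..} x"
  using \<open>1 \<le> N\<close>
proof (induction N rule: nat_induct_at_least)
  case base
  show ?case
    using min_one_mult_le_indicator[OF s K] by simp
next
  case (Suc N)
  have level_sum_nonneg: "0 \<le> (\<Sum>i\<in>{1..<N}. s * K (Suc i) * indicator {K i<..} x)"
    using s K by (intro sum_nonneg) auto
  have split_last: "(\<Sum>i\<in>{1..<Suc N}. s * K (Suc i) * indicator {K i<..} x)
      = (\<Sum>i\<in>{1..<N}. s * K (Suc i) * indicator {K i<..} x) + s * K (Suc N) * indicator {K N<..} x"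
    using Suc.hyps by (rule sum.atLeastLessThan_Suc)
  show ?case
  proof (cases "x \<le> K N")
    case True
    then show ?thesis
      using Suc.IH split_last by (simp add: indicator_def)
  next
    case False
    then have "s * K (Suc N) * indicator {K N<..} x = s * K (Suc N)"
      by simp
    moreover have "0 \<le> s * K 1"
      using s K by simp
    ultimately show ?thesis
      using min_one_mult_le_indicator[OF s K[of "Suc N"], of x] split_last level_sum_nonneg
      by linarith
  qed
qed

lemma (in prob_space) expectation_indicator_greater:
  fixes G :: "'a \<Rightarrow> real"
  shows "expectation (\<lambda>\<omega>. indicator {c<..} (G \<omega>)) = prob {\<omega>\<in>space M. c < G \<omega>}"
proof -
  have "{\<omega>\<in>space M. c < G \<omega>} = G -` {c<..} \<inter> space M"
    by auto
  then show ?thesis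
    by (simp add: indicator_vimage[symmetric])
qed

lemma (in prob_space) expectation_min_one_mult_le_level_sum:
  fixes G :: "'a \<Rightarrow> real" and K :: "nat \<Rightarrow> real"
  assumes [measurable]: "G \<in> borel_measurable M"
    and "1 \<le> N" "0 \<le> s" and K: "\<And>i. 0 \<le> K i"
  shows "expectation (\<lambda>\<omega>. min 1 (s * G \<omega>)) \<le> s * K 1
           + (\<Sum>i\<in>{1..<N}. s * K (Suc i) * prob {\<omega>\<in>space M. K i < G \<omega>})
           + prob {\<omega>\<in>space M. K N < G \<omega>}"
proof -
  have indicator_integrable: "integrable M (\<lambda>\<omega>. indicator {c<..} (G \<omega>) :: real)" for c
    by (rule integrable_const_bound[where B=1]) (auto simp: indicator_def)
  let ?level_bound = "\<lambda>\<omega>. s * K 1 + (\<Sum>i\<in>{1..<N}. s * K (Suc i) * indicator {K i<..} (G \<omega>))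
           + indicator {K N<..} (G \<omega>)"
  have "integrable M ?level_bound"
    by (intro Bochner_Integration.integrable_add Bochner_Integration.integrable_sum
        integrable_mult_right integrable_const indicator_integrable)
  then have "expectation (\<lambda>\<omega>. min 1 (s * G \<omega>)) \<le> expectation ?level_bound"
    using assms
    by (intro integral_mono' min_one_mult_le_level_sum add_nonneg_nonneg sum_nonneg) auto
  also have "\<dots> = s * K 1
           + (\<Sum>i\<in>{1..<N}. s * K (Suc i) * prob {\<omega>\<in>space M. K i < G \<omega>})
           + prob {\<omega>\<in>space M. K N < G \<omega>}"
    using indicator_integrable
    by (simp only: Bochner_Integration.integral_add Bochner_Integration.integral_sum
        integral_mult_right_zero lebesgue_integral_const prob_space scaleR_one
        expectation_indicator_greater Bochner_Integration.integrable_add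
        Bochner_Integration.integrable_sum integrable_mult_right integrable_const)
  finally show ?thesis .
qed

lemma min_le_convex_combination:
  fixes a b x :: real
  assumes "0 \<le> x" "x \<le> 1"
  shows "min a b \<le> (1 - x) * a + x * b"
proof -
  have "(1 - x) * min a b \<le> (1 - x) * a" "x * min a b \<le> x * b"
    using assms by (simp_all add: mult_left_mono)
  then show ?thesis
    by (simp add: algebra_simps)
qed

lemma (in prob_space) expectation_min_one_power_tail_le:
  fixes G :: "'a \<Rightarrow> real" and N :: nat
  assumes G: "G \<in> borel_measurable M"
    and tail: "\<forall>u>u0. prob {\<omega>\<in>space M. G \<omega> > u} \<le> u powr (-\<beta>)"
    and \<alpha>: "0 \<le> \<alpha>" and N: "1 \<le> N" and t: "1 < t" "u0 < t powr (\<alpha> / N)"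
    and s: "0 \<le> s" "s \<le> t powr (-\<alpha>)"
  shows "expectation (\<lambda>\<omega>. min 1 (s * G \<omega>)) \<le> (N + 1) * t powr (- min \<alpha> (\<alpha> * \<beta>) + \<alpha> / N)"
proof -
  define K where "K i = t powr (\<alpha> * i / N)" for i :: nat
  define B where "B = t powr (- min \<alpha> (\<alpha> * \<beta>) + \<alpha> / N)"
  have level_tail: "prob {\<omega>\<in>space M. K i < G \<omega>} \<le> t powr (- \<alpha> * \<beta> * i / N)" if "1 \<le> i" for i
  proof -
    have "\<alpha> * 1 \<le> \<alpha> * i"
      using \<alpha> that by (intro mult_left_mono) auto
    then have "t powr (\<alpha> / N) \<le> K i"
      unfolding K_def using t by (intro powr_mono divide_right_mono) auto
    then have "prob {\<omega>\<in>space M. K i < G \<omega>} \<le> K i powr (-\<beta>)"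
      using tail t by auto
    also have "\<dots> = t powr (- \<alpha> * \<beta> * i / N)"
      unfolding K_def by (simp add: powr_powr mult_ac)
    finally show ?thesis .
  qed
  have level_bound: "t powr (- \<alpha> * (1 - i / N) - \<alpha> * \<beta> * (i / N) + \<alpha> / N) \<le> B" if "i \<le> N" for i :: nat
  proof -
    have "min \<alpha> (\<alpha> * \<beta>) \<le> (1 - i / N) * \<alpha> + i / N * (\<alpha> * \<beta>)"
      using that by (intro min_le_convex_combination) (auto simp: divide_le_eq_1)
    then show ?thesis
      unfolding B_def using t by (intro powr_mono) (auto simp: algebra_simps)
  qed
  have first: "s * K 1 \<le> B"
  proof -
    have "s * K 1 \<le> t powr (-\<alpha>) * t powr (\<alpha> / N)"
      unfolding K_def using s by (simp add: mult_right_mono)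
    also have "\<dots> \<le> B"
      using level_bound[of 0] by (simp add: powr_add[symmetric])
    finally show ?thesis .
  qed
  have middle: "s * K (Suc i) * prob {\<omega>\<in>space M. K i < G \<omega>} \<le> B" if "i \<in> {1..<N}" for i
  proof -
    have "s * K (Suc i) * prob {\<omega>\<in>space M. K i < G \<omega>}
        \<le> t powr (-\<alpha>) * K (Suc i) * t powr (- \<alpha> * \<beta> * i / N)"
      using s level_tail[of i] that unfolding K_def by (intro mult_mono) auto
    also have "\<dots> = t powr (- \<alpha> * (1 - i / N) - \<alpha> * \<beta> * (i / N) + \<alpha> / N)"
      unfolding K_def using N by (simp add: powr_add[symmetric] field_simps)
    also have "\<dots> \<le> B"
      using that by (intro level_bound) auto
    finally show ?thesis .
  qed
  have last: "prob {\<omega>\<in>space M. K N < G \<omega>} \<le> B"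
  proof -
    have "prob {\<omega>\<in>space M. K N < G \<omega>} \<le> t powr (- \<alpha> * (1 - N / N) - \<alpha> * \<beta> * (N / N))"
      using level_tail[OF N] N by simp
    also have "\<dots> \<le> t powr (- \<alpha> * (1 - N / N) - \<alpha> * \<beta> * (N / N) + \<alpha> / N)"
      using t \<alpha> by (intro powr_mono) auto
    also have "\<dots> \<le> B"
      by (rule level_bound) simp
    finally show ?thesis .
  qed
  have "expectation (\<lambda>\<omega>. min 1 (s * G \<omega>)) \<le> s * K 1
           + (\<Sum>i\<in>{1..<N}. s * K (Suc i) * prob {\<omega>\<in>space M. K i < G \<omega>})
           + prob {\<omega>\<in>space M. K N < G \<omega>}"
    using G N s by (intro expectation_min_one_mult_le_level_sum) (auto simp: K_def)
  also have "\<dots> \<le> B + real (card {1..<N}) * B + B"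
    using first middle last by (intro add_mono sum_bounded_above) auto
  also have "\<dots> = (N + 1) * B"
    using N by (simp add: of_nat_diff algebra_simps)
  finally show ?thesis
    unfolding B_def .
qed

lemma less_powr_if_powr_inverse_less:
  fixes a t p :: real
  assumes "0 \<le> a" "0 < t" "0 < p" "a powr (1 / p) < t"
  shows "a < t powr p"
proof -
  have "(a powr (1 / p)) powr p < t powr p"
    using assms by (intro powr_less_mono2) auto
  then show ?thesis
    using assms by (simp add: powr_powr)
qed

theorem lemma2p3:
  fixes M :: "'a measure" and f :: "real \<Rightarrow> real" and g :: "real \<Rightarrow> real \<Rightarrow> real"
    and W1 W2 :: "'a \<Rightarrow> real" and \<alpha> \<beta> t1 t2 :: real
  assumes "prob_space M"
    and f_nonneg: "\<forall>t\<ge>0. f t \<ge> 0"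
    and g_nonneg: "\<forall>x y. g x y \<ge> 0"
    and g_sym: "\<forall>x y. g x y = g y x"
    and g_meas: "(\<lambda>(x, y). g x y) \<in> borel_measurable borel"
    and W1_rv: "W1 \<in> borel_measurable M"
    and W2_rv: "W2 \<in> borel_measurable M"
    and indep: "prob_space.indep_var M borel W1 borel W2"
    and ident: "distr M borel W1 = distr M borel W2"
    and \<alpha>: "\<alpha> > 1" "t1 \<ge> 0" "\<forall>t>t1. f t \<le> t powr (-\<alpha>)"
    and \<beta>: "\<beta> > 0" "t2 \<ge> 0"
      "\<forall>t>t2. measure M {\<omega> \<in> space M. g (W1 \<omega>) (W2 \<omega>) > t} \<le> t powr (-\<beta>)"
  shows "\<forall>\<epsilon>>0. \<exists>t0>0. \<forall>t>t0.
           (\<integral>\<omega>. kappa f g t (W1 \<omega>) (W2 \<omega>) \<partial>M) \<le> t powr (- min \<alpha> (\<alpha> * \<beta>) + \<epsilon>)"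
proof (intro allI impI)
  fix \<epsilon> :: real
  assume "\<epsilon> > 0"
  interpret prob_space M by fact
  define G where "G \<omega> = g (W1 \<omega>) (W2 \<omega>)" for \<omega>
  have G_meas: "G \<in> borel_measurable M"
    using measurable_comp[OF borel_measurable_Pair[OF W1_rv W2_rv] g_meas]
    by (simp add: G_def[abs_def] o_def)
  have G_tail: "\<forall>u>t2. prob {\<omega>\<in>space M. G \<omega> > u} \<le> u powr (-\<beta>)"
    using \<beta>(3) by (simp add: G_def)
  obtain N :: nat where N: "1 \<le> N" "\<alpha> / N \<le> \<epsilon> / 2"
  proof -
    obtain N :: nat where "max 1 (2 * \<alpha> / \<epsilon>) \<le> N"
      using real_arch_simple by blast
    then show ?thesis
      using \<open>\<epsilon> > 0\<close> \<alpha>(1) by (intro that[of N]) (auto simp: field_simps)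
  qed
  define t0 where "t0 = max (max 1 t1) (max ((N + 1) powr (1 / (\<epsilon> / 2))) (t2 powr (1 / (\<alpha> / N))))"
  show "\<exists>t0>0. \<forall>t>t0. (\<integral>\<omega>. kappa f g t (W1 \<omega>) (W2 \<omega>) \<partial>M) \<le> t powr (- min \<alpha> (\<alpha> * \<beta>) + \<epsilon>)"
  proof (intro exI[of _ t0] conjI allI impI)
    show "0 < t0"
      by (simp add: t0_def)
    fix t
    assume "t > t0"
    then have t: "1 < t" "t1 < t" "(N + 1) powr (1 / (\<epsilon> / 2)) < t" "t2 powr (1 / (\<alpha> / N)) < t"
      by (auto simp: t0_def)
    have "(\<integral>\<omega>. kappa f g t (W1 \<omega>) (W2 \<omega>) \<partial>M) = expectation (\<lambda>\<omega>. min 1 (f t * G \<omega>))"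
      by (simp add: kappa_def G_def)
    also have "\<dots> \<le> (N + 1) * t powr (- min \<alpha> (\<alpha> * \<beta>) + \<alpha> / N)"
      using \<alpha> N(1) t(1,2) f_nonneg less_powr_if_powr_inverse_less[OF \<beta>(2) _ _ t(4)]
      by (intro expectation_min_one_power_tail_le[OF G_meas G_tail]) auto
    also have "\<dots> \<le> t powr (\<epsilon> / 2) * t powr (- min \<alpha> (\<alpha> * \<beta>) + \<epsilon> / 2)"
      using less_powr_if_powr_inverse_less[OF _ _ _ t(3)] \<open>\<epsilon> > 0\<close> t(1) N(2)
      by (intro mult_mono powr_mono) auto
    also have "\<dots> = t powr (- min \<alpha> (\<alpha> * \<beta>) + \<epsilon>)"
      by (simp add: powr_add[symmetric])
    finally show "(\<integral>\<omega>. kappa f g t (W1 \<omega>) (W2 \<omega>) \<partial>M) \<le> t powr (- min \<alpha> (\<alpha> * \<beta>) + \<epsilon>)" .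
  qed
qed

end
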